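(* Let $\mathcal{H}$ be a hypertree, $T$ a host tree of $\mathcal{H}$, and $F$ a subset of $V(\mathcal{H})$ that induces a subtree of every host tree of $\mathcal{H}$ and is not a one-element set. Then: (1) if $uv$ is an edge of $T$ with $\{u,v\}\subseteq F$, then $I_\mathcal{H}(uv)\subseteq F$; (2) $F=\bigcup_{uv\in E(T[F])} I_\mathcal{H}(uv)$, and this union is connected.
   Context: A hypergraph $\mathcal{H}$ has a finite vertex set $V(\mathcal{H})$ and a finite family of nonempty subsets (edges). A host tree of $\mathcal{H}$ is a tree with vertex set $V(\mathcal{H})$ in which every edge of $\mathcal{H}$ induces a connected subgraph; $\mathcal{H}$ is a hypertree if it has a host tree. For $V'\subseteq V(\mathcal{H})$, $I_\mathcal{H}(V')$ is the intersection of all edges of $\mathcal{H}$ containing $V'$, or $V(\mathcal{H})$ if no edge contains $V'$; $I_\mathcal{H}(uv)$ means $I_\mathcal{H}(\{u,v\})$. A union of sets is connected if the intersection graph of the sets is connected. $T[F]$ is the subgraph of $T$ induced by $F$. *)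

theory Defs
  imports Main
begin

definition hypergraph :: "'a set \<Rightarrow> 'a set set \<Rightarrow> bool" where
  "hypergraph V E \<longleftrightarrow> finite V \<and> finite E \<and> (\<forall>e\<in>E. e \<noteq> {} \<and> e \<subseteq> V)"

definition graph :: "'a set \<Rightarrow> 'a set set \<Rightarrow> bool" where
  "graph V ET \<longleftrightarrow> (\<forall>e\<in>ET. \<exists>u v. e = {u, v} \<and> u \<noteq> v \<and> u \<in> V \<and> v \<in> V)"

definition adj_in :: "'a set set \<Rightarrow> 'a set \<Rightarrow> ('a \<times> 'a) set" where
  "adj_in ET S = {(x, y). {x, y} \<in> ET \<and> x \<noteq> y \<and> x \<in> S \<and> y \<in> S}"

definition connected_graph :: "'a set \<Rightarrow> 'a set set \<Rightarrow> bool" where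
  "connected_graph V ET \<longleftrightarrow> (\<forall>u\<in>V. \<forall>v\<in>V. (u, v) \<in> (adj_in ET V)\<^sup>*)"

definition is_cycle :: "'a set set \<Rightarrow> 'a list \<Rightarrow> bool" where
  "is_cycle ET cs \<longleftrightarrow> length cs \<ge> 3 \<and> distinct cs
     \<and> (\<forall>i. Suc i < length cs \<longrightarrow> {cs ! i, cs ! Suc i} \<in> ET)
     \<and> {last cs, hd cs} \<in> ET"

definition acyclic_graph :: "'a set \<Rightarrow> 'a set set \<Rightarrow> bool" where
  "acyclic_graph V ET \<longleftrightarrow> \<not> (\<exists>cs. set cs \<subseteq> V \<and> is_cycle ET cs)"

definition tree :: "'a set \<Rightarrow> 'a set set \<Rightarrow> bool" where
  "tree V ET \<longleftrightarrow> V \<noteq> {} \<and> graph V ET \<and> connected_graph V ET \<and> acyclic_graph V ET"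

definition induced_edges :: "'a set set \<Rightarrow> 'a set \<Rightarrow> 'a set set" where
  "induced_edges ET F = {e \<in> ET. e \<subseteq> F}"

definition host_tree :: "'a set \<Rightarrow> 'a set set \<Rightarrow> 'a set set \<Rightarrow> bool" where
  "host_tree V E ET \<longleftrightarrow> tree V ET \<and> (\<forall>e\<in>E. connected_graph e (induced_edges ET e))"

definition hypertree :: "'a set \<Rightarrow> 'a set set \<Rightarrow> bool" where
  "hypertree V E \<longleftrightarrow> hypergraph V E \<and> (\<exists>ET. host_tree V E ET)"

definition I_H :: "'a set \<Rightarrow> 'a set set \<Rightarrow> 'a set \<Rightarrow> 'a set" where
  "I_H V E V' = (if \<exists>e\<in>E. V' \<subseteq> e then \<Inter>{e \<in> E. V' \<subseteq> e} else V)"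

text \<open>A union of a family of sets is connected if the intersection graph of the family is connected.\<close>
definition connected_union :: "'a set set \<Rightarrow> bool" where
  "connected_union S \<longleftrightarrow>
     (\<forall>A\<in>S. \<forall>B\<in>S. (A, B) \<in> {(X, Y). X \<in> S \<and> Y \<in> S \<and> X \<inter> Y \<noteq> {}}\<^sup>*)"

end

theory Submission
  imports Defs "HOL-Library.Transitive_Closure_Table"
begin

text \<open>Suppose some \<open>w \<in> I_H(uv)\<close> lies outside \<open>F\<close>, for an edge \<open>uv\<close> of \<open>T\<close> inside \<open>F\<close>, and say
  \<open>w\<close> lies on the side of \<open>v\<close> in \<open>T - uv\<close>. Replacing the edge \<open>uv\<close> by \<open>uw\<close> gives again a tree,
  and again a host tree: every hyperedge containing \<open>u\<close> and \<open>v\<close> also contains \<open>w\<close>, so it stays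
  connected. The new host tree induces on \<open>F\<close> a subgraph of \<open>T - uv\<close>, in which \<open>u\<close> and \<open>v\<close> are
  disconnected; this contradicts the choice of \<open>F\<close>. Part (2) follows because every vertex of
  \<open>F\<close> lies on an edge of \<open>T[F]\<close>, and the sets \<open>I_H(uv)\<close> contain these edges, which are
  chained together by the connected graph \<open>T[F]\<close>.\<close>

lemma sym_adj_in: "sym (adj_in ET S)"
  unfolding sym_def adj_in_def by (auto simp: insert_commute)

lemma adj_in_rtrancl_sym: "(a, b) \<in> (adj_in ET S)\<^sup>* \<Longrightarrow> (b, a) \<in> (adj_in ET S)\<^sup>*"
  using sym_rtrancl[OF sym_adj_in] by (rule symD)

lemma adj_in_mono: "ET \<subseteq> ET' \<Longrightarrow> S \<subseteq> S' \<Longrightarrow> adj_in ET S \<subseteq> adj_in ET' S'"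
  unfolding adj_in_def by auto

lemma adj_in_rtrancl_mono:
  "(a, b) \<in> (adj_in ET S)\<^sup>* \<Longrightarrow> ET \<subseteq> ET' \<Longrightarrow> S \<subseteq> S' \<Longrightarrow> (a, b) \<in> (adj_in ET' S')\<^sup>*"
  using rtrancl_mono[OF adj_in_mono] by blast

lemma adj_in_edgeI: "{a, b} \<in> ET \<Longrightarrow> a \<noteq> b \<Longrightarrow> a \<in> S \<Longrightarrow> b \<in> S \<Longrightarrow> (a, b) \<in> adj_in ET S"
  unfolding adj_in_def by simp

lemma rtrancl_adj_in_insert_edge_cases:
  assumes "(a, b) \<in> (adj_in (insert {x, y} H) S)\<^sup>*"
  shows "(a, b) \<in> (adj_in H S)\<^sup>*
    \<or> (a, x) \<in> (adj_in H S)\<^sup>* \<and> (y, b) \<in> (adj_in H S)\<^sup>*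
    \<or> (a, y) \<in> (adj_in H S)\<^sup>* \<and> (x, b) \<in> (adj_in H S)\<^sup>*"
  using assms
proof (induction rule: rtrancl_induct)
  case (step b c)
  show ?case
  proof (cases "{b, c} \<in> H")
    case True
    then have "(b, c) \<in> adj_in H S"
      using step.hyps(2) by (auto simp: adj_in_def)
    with step.IH show ?thesis
      by (meson rtrancl.rtrancl_into_rtrancl)
  next
    case False
    then have "b = x \<and> c = y \<or> b = y \<and> c = x"
      using step.hyps(2) by (auto simp: adj_in_def doubleton_eq_iff)
    with step.IH show ?thesis
      by auto
  qed
qed simp

lemma connected_graph_iff_reachable_from:
  assumes "u \<in> S"
  shows "connected_graph S H \<longleftrightarrow> (\<forall>x\<in>S. (u, x) \<in> (adj_in H S)\<^sup>*)"
proof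
  assume reach: "\<forall>x\<in>S. (u, x) \<in> (adj_in H S)\<^sup>*"
  have "(x, y) \<in> (adj_in H S)\<^sup>*" if "x \<in> S" "y \<in> S" for x y
  proof -
    have "(u, x) \<in> (adj_in H S)\<^sup>*" "(u, y) \<in> (adj_in H S)\<^sup>*"
      using reach that by blast+
    from adj_in_rtrancl_sym[OF this(1)] this(2) show ?thesis
      by (rule rtrancl_trans)
  qed
  then show "connected_graph S H"
    unfolding connected_graph_def by blast
qed (use assms in \<open>simp add: connected_graph_def\<close>)

lemma connected_graph_mono:
  assumes "connected_graph S H" "H \<subseteq> H'"
  shows "connected_graph S H'"
  using assms(1) adj_in_rtrancl_mono[OF _ assms(2) order_refl] unfolding connected_graph_def by blast

lemma connected_graph_remove_edge:
  assumes "connected_graph S H" "{u, v} \<in> H" "u \<in> S" "x \<in> S"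
  shows "(u, x) \<in> (adj_in (H - {{u, v}}) S)\<^sup>* \<or> (v, x) \<in> (adj_in (H - {{u, v}}) S)\<^sup>*"
proof -
  have "(u, x) \<in> (adj_in H S)\<^sup>*"
    using assms(1,3,4) unfolding connected_graph_def by blast
  moreover have "H = insert {u, v} (H - {{u, v}})"
    using assms(2) by blast
  ultimately have "(u, x) \<in> (adj_in (insert {u, v} (H - {{u, v}})) S)\<^sup>*"
    by simp
  from rtrancl_adj_in_insert_edge_cases[OF this] show ?thesis
    by blast
qed

lemma connected_graph_edge_swap:
  assumes conn: "connected_graph S H" and uv: "{u, v} \<in> H" and "u \<in> S" "w \<in> S"
    and vw: "(v, w) \<in> (adj_in (H - {{u, v}}) S)\<^sup>*"
  shows "connected_graph S (insert {u, w} (H - {{u, v}}))"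
proof -
  define H' where "H' = insert {u, w} (H - {{u, v}})"
  have sub: "H - {{u, v}} \<subseteq> H'"
    unfolding H'_def by blast
  have uw: "(u, w) \<in> (adj_in H' S)\<^sup>*"
    using \<open>u \<in> S\<close> \<open>w \<in> S\<close> by (cases "u = w") (auto simp: H'_def intro: adj_in_edgeI)
  have "(u, x) \<in> (adj_in H' S)\<^sup>*" if "x \<in> S" for x
    using connected_graph_remove_edge[OF conn uv \<open>u \<in> S\<close> that]
  proof
    assume "(u, x) \<in> (adj_in (H - {{u, v}}) S)\<^sup>*"
    then show ?thesis
      using adj_in_rtrancl_mono[OF _ sub order_refl] by blast
  next
    assume "(v, x) \<in> (adj_in (H - {{u, v}}) S)\<^sup>*"
    with adj_in_rtrancl_sym[OF vw] have "(w, x) \<in> (adj_in (H - {{u, v}}) S)\<^sup>*"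
      by (rule rtrancl_trans)
    then have "(w, x) \<in> (adj_in H' S)\<^sup>*"
      using adj_in_rtrancl_mono[OF _ sub order_refl] by blast
    with uw show ?thesis
      by (rule rtrancl_trans)
  qed
  then show ?thesis
    using connected_graph_iff_reachable_from[OF \<open>u \<in> S\<close>] unfolding H'_def by blast
qed

lemma acyclic_graph_mono: "acyclic_graph V ET \<Longrightarrow> ET' \<subseteq> ET \<Longrightarrow> acyclic_graph V ET'"
  unfolding acyclic_graph_def is_cycle_def by blast

text \<open>A repetition-free path from \<open>a\<close> to \<open>b\<close> avoiding the edge \<open>ab\<close>, closed up by \<open>ab\<close>,
  is a cycle.\<close>

lemma acyclic_graph_edge_is_bridge:
  assumes acyc: "acyclic_graph V ET" and ab: "{a, b} \<in> ET" "a \<noteq> b"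
  shows "(a, b) \<notin> (adj_in (ET - {{a, b}}) V)\<^sup>*"
proof
  let ?r = "\<lambda>x y. (x, y) \<in> adj_in (ET - {{a, b}}) V"
  assume "(a, b) \<in> (adj_in (ET - {{a, b}}) V)\<^sup>*"
  then have "?r\<^sup>*\<^sup>* a b"
    by (simp add: rtranclp_rtrancl_eq)
  then obtain xs0 where "rtrancl_path ?r a xs0 b"
    by (auto simp: rtranclp_eq_rtrancl_path)
  then obtain xs where path: "rtrancl_path ?r a xs b" and dist: "distinct (a # xs)"
    by (rule rtrancl_path_distinct)
  have "xs \<noteq> []"
    using path ab(2) by (auto elim: rtrancl_path.cases)
  then have last: "last xs = b"
    using rtrancl_path_last[OF path] by blast
  have steps: "?r ((a # xs) ! i) (xs ! i)" if "i < length xs" for i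
    using rtrancl_path_nth[OF path that] .
  have "length xs \<noteq> 1"
  proof
    assume "length xs = 1"
    then have "xs = [b]"
      using last by (cases xs) auto
    then show False
      using steps[of 0] by (auto simp: adj_in_def)
  qed
  with \<open>xs \<noteq> []\<close> have "length (a # xs) \<ge> 3"
    by (cases "length xs") auto
  moreover have "{(a # xs) ! i, (a # xs) ! Suc i} \<in> ET" if "Suc i < length (a # xs)" for i
    using steps[of i] that by (simp add: adj_in_def)
  moreover have "{last (a # xs), hd (a # xs)} \<in> ET"
    using ab(1) last \<open>xs \<noteq> []\<close> by (simp add: insert_commute)
  moreover have "set (a # xs) \<subseteq> V"
    using steps[of 0] rtrancl_path_Range[OF path] \<open>xs \<noteq> []\<close> by (auto simp: adj_in_def)
  ultimately show False
    using acyc dist unfolding acyclic_graph_def is_cycle_def by blast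
qed

lemma rtrancl_nth_chain:
  assumes "\<And>i. Suc i < length xs \<Longrightarrow> (xs ! i, xs ! Suc i) \<in> r" "k < length xs"
  shows "(xs ! 0, xs ! k) \<in> r\<^sup>*"
  using assms(2) by (induction k) (auto intro: rtrancl_into_rtrancl assms(1))

lemma is_cycle_step_neq_closing_edge:
  assumes cyc: "is_cycle ET cs" and i: "Suc i < length cs"
  shows "{cs ! i, cs ! Suc i} \<noteq> {last cs, hd cs}"
proof
  let ?n = "length cs"
  have n: "?n \<ge> 3" and dist: "distinct cs"
    using cyc unfolding is_cycle_def by blast+
  have idx: "?n - 1 < ?n" "0 < ?n" "i < ?n"
    using n i by auto
  then have ends: "last cs = cs ! (?n - 1)" "hd cs = cs ! 0"
    by (auto simp: last_conv_nth hd_conv_nth)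
  have eq: "cs ! j = cs ! k \<longleftrightarrow> j = k" if "j < ?n" "k < ?n" for j k
    using nth_eq_iff_index_eq[OF dist that] .
  assume "{cs ! i, cs ! Suc i} = {last cs, hd cs}"
  then consider "cs ! i = last cs" | "cs ! i = hd cs" "cs ! Suc i = last cs"
    by (auto simp: doubleton_eq_iff)
  then show False
  proof cases
    case 1
    then have "cs ! i = cs ! (?n - 1)"
      using ends(1) by (rule trans)
    then have "i = ?n - 1"
      using eq[OF idx(3) idx(1)] by blast
    with i show False
      by simp
  next
    case 2
    have "cs ! i = cs ! 0" "cs ! Suc i = cs ! (?n - 1)"
      using trans[OF 2(1) ends(2)] trans[OF 2(2) ends(1)] by blast+
    then have "i = 0" "Suc i = ?n - 1"
      using eq[OF idx(3) idx(2)] eq[OF i idx(1)] by blast+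
    with n show False
      by simp
  qed
qed

lemma is_cycle_nonbridge_edge:
  assumes cyc: "is_cycle ET cs" and V: "set cs \<subseteq> V"
  shows "\<exists>a b. {a, b} \<in> ET \<and> a \<noteq> b \<and> a \<in> V \<and> b \<in> V
    \<and> (a, b) \<in> (adj_in (ET - {{a, b}}) V)\<^sup>*"
proof -
  let ?n = "length cs"
  define a b where "a = last cs" and "b = hd cs"
  have n: "?n \<ge> 3" and dist: "distinct cs" and ab: "{a, b} \<in> ET"
    and edges: "\<And>i. Suc i < ?n \<Longrightarrow> {cs ! i, cs ! Suc i} \<in> ET"
    using cyc unfolding is_cycle_def a_def b_def by blast+
  have idx: "?n - 1 < ?n" "0 < ?n"
    using n by auto
  then have ends: "a = cs ! (?n - 1)" "b = cs ! 0"
    unfolding a_def b_def by (auto simp: last_conv_nth hd_conv_nth)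
  have "a \<noteq> b"
    unfolding ends using nth_eq_iff_index_eq[OF dist idx] n by simp
  have "a \<in> V" "b \<in> V"
    unfolding ends using idx V by auto
  have "(cs ! i, cs ! Suc i) \<in> adj_in (ET - {{a, b}}) V" if i: "Suc i < ?n" for i
  proof -
    have "{cs ! i, cs ! Suc i} \<noteq> {a, b}"
      unfolding a_def b_def using is_cycle_step_neq_closing_edge[OF cyc i] .
    moreover have "cs ! i \<noteq> cs ! Suc i"
      using dist i by (simp add: nth_eq_iff_index_eq)
    ultimately show ?thesis
      using edges[OF i] V i by (auto simp: adj_in_def)
  qed
  then have "(b, a) \<in> (adj_in (ET - {{a, b}}) V)\<^sup>*"
    unfolding ends using idx by (intro rtrancl_nth_chain) auto
  then show ?thesis
    using ab \<open>a \<noteq> b\<close> \<open>a \<in> V\<close> \<open>b \<in> V\<close> by (blast dest: adj_in_rtrancl_sym)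
qed

lemma acyclic_graph_insert_edge:
  assumes acyc: "acyclic_graph V H" and uw: "(u, w) \<notin> (adj_in H V)\<^sup>*"
  shows "acyclic_graph V (insert {u, w} H)"
proof (rule ccontr)
  assume "\<not> acyclic_graph V (insert {u, w} H)"
  then obtain a b where ab: "{a, b} \<in> insert {u, w} H" "a \<noteq> b" "a \<in> V" "b \<in> V"
    and ab_reach: "(a, b) \<in> (adj_in (insert {u, w} H - {{a, b}}) V)\<^sup>*"
    unfolding acyclic_graph_def by (metis is_cycle_nonbridge_edge)
  show False
  proof (cases "{a, b} = {u, w}")
    case True
    then have "insert {u, w} H - {{a, b}} \<subseteq> H"
      by blast
    from adj_in_rtrancl_mono[OF ab_reach this order_refl] have "(a, b) \<in> (adj_in H V)\<^sup>*" .
    then show False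
      using uw True by (auto simp: doubleton_eq_iff dest: adj_in_rtrancl_sym)
  next
    case False
    let ?H0 = "H - {{a, b}}"
    have "{a, b} \<in> H"
      using ab(1) False by blast
    then have edge: "(a, b) \<in> adj_in H V" "(b, a) \<in> adj_in H V"
      using ab by (auto intro: adj_in_edgeI simp: insert_commute)
    have to_H: "(x, y) \<in> (adj_in H V)\<^sup>*" "(y, x) \<in> (adj_in H V)\<^sup>*"
      if "(x, y) \<in> (adj_in ?H0 V)\<^sup>*" for x y
      using that adj_in_rtrancl_mono[OF that Diff_subset order_refl] by (auto dest: adj_in_rtrancl_sym)
    have "(a, b) \<in> (adj_in (insert {u, w} ?H0) V)\<^sup>*"
      using ab_reach False by (simp add: insert_Diff_if)
    then consider "(a, b) \<in> (adj_in ?H0 V)\<^sup>*"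
      | "(a, u) \<in> (adj_in ?H0 V)\<^sup>*" "(w, b) \<in> (adj_in ?H0 V)\<^sup>*"
      | "(a, w) \<in> (adj_in ?H0 V)\<^sup>*" "(u, b) \<in> (adj_in ?H0 V)\<^sup>*"
      by (blast dest: rtrancl_adj_in_insert_edge_cases)
    then show False
    proof cases
      case 1
      then show False
        using acyclic_graph_edge_is_bridge[OF acyc \<open>{a, b} \<in> H\<close> ab(2)] by blast
    next
      case 2
      then show False
        using uw edge to_H by (meson rtrancl_trans converse_rtrancl_into_rtrancl)
    next
      case 3
      then show False
        using uw edge to_H by (meson rtrancl_trans converse_rtrancl_into_rtrancl)
    qed
  qed
qed

lemma graph_edgeD:
  assumes "graph V ET" "{u, v} \<in> ET"
  shows "u \<noteq> v" "u \<in> V" "v \<in> V"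
proof -
  obtain a b where "{u, v} = {a, b}" "a \<noteq> b" "a \<in> V" "b \<in> V"
    using assms unfolding graph_def by blast
  then show "u \<noteq> v" "u \<in> V" "v \<in> V"
    by (auto simp: doubleton_eq_iff)
qed

lemma tree_edge_is_bridge:
  assumes "tree V T" "{u, v} \<in> T"
  shows "(u, v) \<notin> (adj_in (T - {{u, v}}) V)\<^sup>*"
proof -
  have "graph V T" "acyclic_graph V T"
    using assms(1) unfolding tree_def by blast+
  then show ?thesis
    using acyclic_graph_edge_is_bridge[OF _ assms(2) graph_edgeD(1)[OF _ assms(2)]] by blast
qed

lemma tree_remove_edge_separates:
  assumes "tree V T" "{u, v} \<in> T" "(v, w) \<in> (adj_in (T - {{u, v}}) V)\<^sup>*"
  shows "(u, w) \<notin> (adj_in (T - {{u, v}}) V)\<^sup>*"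
proof
  assume "(u, w) \<in> (adj_in (T - {{u, v}}) V)\<^sup>*"
  from rtrancl_trans[OF this adj_in_rtrancl_sym[OF assms(3)]] show False
    using tree_edge_is_bridge[OF assms(1,2)] by blast
qed

lemma tree_edge_swap:
  assumes tree: "tree V T" and uv: "{u, v} \<in> T" and "w \<in> V"
    and vw: "(v, w) \<in> (adj_in (T - {{u, v}}) V)\<^sup>*"
  shows "tree V (insert {u, w} (T - {{u, v}}))"
proof -
  have T: "V \<noteq> {}" "graph V T" "connected_graph V T" "acyclic_graph V T"
    using tree unfolding tree_def by auto
  have "u \<in> V"
    using graph_edgeD(2)[OF T(2) uv] .
  have uw: "(u, w) \<notin> (adj_in (T - {{u, v}}) V)\<^sup>*"
    using tree_remove_edge_separates[OF tree uv vw] .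
  then have "u \<noteq> w"
    by auto
  have "graph V (insert {u, w} (T - {{u, v}}))"
    using T(2) \<open>u \<in> V\<close> \<open>w \<in> V\<close> \<open>u \<noteq> w\<close> unfolding graph_def by auto
  moreover have "connected_graph V (insert {u, w} (T - {{u, v}}))"
    using connected_graph_edge_swap[OF T(3) uv \<open>u \<in> V\<close> \<open>w \<in> V\<close> vw] .
  moreover have "acyclic_graph V (insert {u, w} (T - {{u, v}}))"
    using acyclic_graph_insert_edge[OF acyclic_graph_mono[OF T(4) Diff_subset] uw] .
  ultimately show ?thesis
    using T(1) unfolding tree_def by blast
qed

lemma subset_I_H: "X \<subseteq> V \<Longrightarrow> X \<subseteq> I_H V E X"
  unfolding I_H_def by auto

lemma I_H_subset: "hypergraph V E \<Longrightarrow> I_H V E X \<subseteq> V"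
  unfolding I_H_def hypergraph_def by auto

lemma I_H_subset_edge: "e \<in> E \<Longrightarrow> X \<subseteq> e \<Longrightarrow> I_H V E X \<subseteq> e"
  unfolding I_H_def by auto

lemma connected_induced_edges_swap:
  assumes conn: "connected_graph e (induced_edges T e)" and "e \<subseteq> V"
    and uv: "{u, v} \<in> T" "{u, v} \<subseteq> e" and "w \<in> e"
    and uw: "(u, w) \<notin> (adj_in (T - {{u, v}}) V)\<^sup>*"
  shows "connected_graph e (induced_edges (insert {u, w} (T - {{u, v}})) e)"
proof -
  define H where "H = induced_edges T e"
  have "{u, v} \<in> H" "u \<in> e"
    using uv unfolding H_def induced_edges_def by auto
  have "H - {{u, v}} \<subseteq> T - {{u, v}}"
    unfolding H_def induced_edges_def by blast
  from adj_in_rtrancl_mono[OF _ this \<open>e \<subseteq> V\<close>] uw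
  have "(u, w) \<notin> (adj_in (H - {{u, v}}) e)\<^sup>*"
    by blast
  then have "(v, w) \<in> (adj_in (H - {{u, v}}) e)\<^sup>*"
    using connected_graph_remove_edge[OF conn[folded H_def] \<open>{u, v} \<in> H\<close> \<open>u \<in> e\<close> \<open>w \<in> e\<close>]
    by blast
  then have "connected_graph e (insert {u, w} (H - {{u, v}}))"
    by (rule connected_graph_edge_swap[OF conn[folded H_def] \<open>{u, v} \<in> H\<close> \<open>u \<in> e\<close> \<open>w \<in> e\<close>])
  moreover have "insert {u, w} (H - {{u, v}}) \<subseteq> induced_edges (insert {u, w} (T - {{u, v}})) e"
    using \<open>u \<in> e\<close> \<open>w \<in> e\<close> unfolding H_def induced_edges_def by auto
  ultimately show ?thesis
    by (rule connected_graph_mono)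
qed

lemma host_tree_edge_swap:
  assumes hg: "hypergraph V E" and host: "host_tree V E T" and uv: "{u, v} \<in> T"
    and wI: "w \<in> I_H V E {u, v}" and vw: "(v, w) \<in> (adj_in (T - {{u, v}}) V)\<^sup>*"
  shows "host_tree V E (insert {u, w} (T - {{u, v}}))"
proof -
  have tree: "tree V T"
    using host unfolding host_tree_def by blast
  have "w \<in> V"
    using wI I_H_subset[OF hg] by blast
  have uw: "(u, w) \<notin> (adj_in (T - {{u, v}}) V)\<^sup>*"
    using tree_remove_edge_separates[OF tree uv vw] .
  have "connected_graph e (induced_edges (insert {u, w} (T - {{u, v}})) e)" if e: "e \<in> E" for e
  proof -
    have conn: "connected_graph e (induced_edges T e)" and "e \<subseteq> V"
      using host hg e unfolding host_tree_def hypergraph_def by auto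
    show ?thesis
    proof (cases "{u, v} \<subseteq> e")
      case False
      then have "induced_edges T e \<subseteq> induced_edges (insert {u, w} (T - {{u, v}})) e"
        unfolding induced_edges_def by auto
      with conn show ?thesis
        by (rule connected_graph_mono)
    next
      case True
      moreover have "w \<in> e"
        using wI I_H_subset_edge[OF e True] by blast
      ultimately show ?thesis
        using connected_induced_edges_swap[OF conn \<open>e \<subseteq> V\<close> uv _ _ uw] by blast
    qed
  qed
  then show ?thesis
    using tree_edge_swap[OF tree uv \<open>w \<in> V\<close> vw] unfolding host_tree_def by blast
qed

definition induces_subtree_of_all_hosts :: "'a set \<Rightarrow> 'a set set \<Rightarrow> 'a set \<Rightarrow> bool" where
  "induces_subtree_of_all_hosts V E F \<longleftrightarrow> (\<forall>T. host_tree V E T \<longrightarrow> tree F (induced_edges T F))"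

lemma I_H_mem_subtree_on_side:
  assumes hg: "hypergraph V E" and host: "host_tree V E T"
    and F: "induces_subtree_of_all_hosts V E F" "F \<subseteq> V"
    and uv: "{u, v} \<in> T" "u \<in> F" "v \<in> F"
    and wI: "w \<in> I_H V E {u, v}" and vw: "(v, w) \<in> (adj_in (T - {{u, v}}) V)\<^sup>*"
  shows "w \<in> F"
proof (rule ccontr)
  assume "w \<notin> F"
  let ?T' = "insert {u, w} (T - {{u, v}})"
  have "host_tree V E ?T'"
    using host_tree_edge_swap[OF hg host uv(1) wI vw] .
  then have "connected_graph F (induced_edges ?T' F)"
    using F(1) unfolding induces_subtree_of_all_hosts_def tree_def by blast
  then have reach: "(u, v) \<in> (adj_in (induced_edges ?T' F) F)\<^sup>*"
    using uv unfolding connected_graph_def by blast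
  have "induced_edges ?T' F \<subseteq> T - {{u, v}}"
    using \<open>w \<notin> F\<close> unfolding induced_edges_def by auto
  from adj_in_rtrancl_mono[OF reach this F(2)] have "(u, v) \<in> (adj_in (T - {{u, v}}) V)\<^sup>*" .
  then show False
    using tree_edge_is_bridge[OF _ uv(1)] host unfolding host_tree_def by blast
qed

theorem I_H_edge_subset_subtree:
  assumes hg: "hypergraph V E" and host: "host_tree V E T"
    and F: "induces_subtree_of_all_hosts V E F" "F \<subseteq> V"
    and uv: "{u, v} \<in> T" "u \<in> F" "v \<in> F"
  shows "I_H V E {u, v} \<subseteq> F"
proof
  fix w
  assume wI: "w \<in> I_H V E {u, v}"
  have conn: "connected_graph V T"
    using host unfolding host_tree_def tree_def by blast
  have "u \<in> V" "w \<in> V"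
    using uv F(2) wI I_H_subset[OF hg] by auto
  then consider "(u, w) \<in> (adj_in (T - {{u, v}}) V)\<^sup>*" | "(v, w) \<in> (adj_in (T - {{u, v}}) V)\<^sup>*"
    using connected_graph_remove_edge[OF conn uv(1)] by blast
  then show "w \<in> F"
  proof cases
    case 1
    then show ?thesis
      using I_H_mem_subtree_on_side[OF hg host F, of v u w] uv wI by (simp add: insert_commute)
  next
    case 2
    then show ?thesis
      by (rule I_H_mem_subtree_on_side[OF hg host F uv wI])
  qed
qed

lemma connected_graph_incident_edge:
  assumes "connected_graph S H" "x \<in> S" "y \<in> S" "x \<noteq> y"
  obtains z where "{x, z} \<in> H"
proof -
  have "(x, y) \<in> (adj_in H S)\<^sup>*"
    using assms unfolding connected_graph_def by blast
  then obtain z where "(x, z) \<in> adj_in H S"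
    using \<open>x \<noteq> y\<close> by (blast elim: converse_rtranclE)
  then show ?thesis
    using that unfolding adj_in_def by blast
qed

lemma induced_edgeE:
  assumes "graph V T" "e \<in> induced_edges T F"
  obtains u v where "e = {u, v}" "{u, v} \<in> T" "u \<in> F" "v \<in> F"
proof -
  have "e \<in> T" "e \<subseteq> F"
    using assms(2) unfolding induced_edges_def by blast+
  moreover obtain u v where "e = {u, v}"
    using assms(1) \<open>e \<in> T\<close> unfolding graph_def by blast
  ultimately show ?thesis
    using that by simp
qed

lemma Union_I_H_induced_edges_eq:
  assumes "graph V T" "F \<subseteq> V" "connected_graph F (induced_edges T F)" "\<not> (\<exists>x. F = {x})"
    and "\<And>u v. {u, v} \<in> T \<Longrightarrow> u \<in> F \<Longrightarrow> v \<in> F \<Longrightarrow> I_H V E {u, v} \<subseteq> F"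
  shows "(\<Union>e\<in>induced_edges T F. I_H V E e) = F"
proof
  show "(\<Union>e\<in>induced_edges T F. I_H V E e) \<subseteq> F"
  proof (rule UN_least)
    fix e
    assume "e \<in> induced_edges T F"
    then obtain u v where "e = {u, v}" "{u, v} \<in> T" "u \<in> F" "v \<in> F"
      by (rule induced_edgeE[OF assms(1)])
    then show "I_H V E e \<subseteq> F"
      using assms(5) by blast
  qed
  show "F \<subseteq> (\<Union>e\<in>induced_edges T F. I_H V E e)"
  proof
    fix x
    assume "x \<in> F"
    then obtain y where "y \<in> F" "y \<noteq> x"
      using assms(4) by blast
    then obtain z where z: "{x, z} \<in> induced_edges T F"
      using connected_graph_incident_edge[OF assms(3) \<open>x \<in> F\<close>] by metis
    then have "x \<in> I_H V E {x, z}"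
      using subset_I_H[of "{x, z}" V E] assms(2) unfolding induced_edges_def by auto
    with z show "x \<in> (\<Union>e\<in>induced_edges T F. I_H V E e)"
      by blast
  qed
qed

lemma adj_in_rtrancl_imp_intersection_chain:
  assumes ext: "\<forall>e\<in>H. e \<subseteq> f e" and "e \<in> H" "a \<in> e"
    and "(a, z) \<in> (adj_in H S)\<^sup>*"
  shows "\<forall>e'\<in>H. z \<in> e' \<longrightarrow> (f e, f e') \<in> {(X, Y). X \<in> f ` H \<and> Y \<in> f ` H \<and> X \<inter> Y \<noteq> {}}\<^sup>*"
  using assms(4)
proof (induction rule: rtrancl_induct)
  let ?R = "{(X, Y). X \<in> f ` H \<and> Y \<in> f ` H \<and> X \<inter> Y \<noteq> {}}"
  have meet: "(f d, f d') \<in> ?R" if "d \<in> H" "d' \<in> H" "x \<in> d" "x \<in> d'" for d d' x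
    using that ext by blast
  {
    case base
    show ?case
    proof (intro ballI impI)
      fix e'
      assume "e' \<in> H" "a \<in> e'"
      then show "(f e, f e') \<in> ?R\<^sup>*"
        using meet[OF \<open>e \<in> H\<close> \<open>e' \<in> H\<close> \<open>a \<in> e\<close>] by blast
    qed
  next
    case (step y z)
    then have yz: "{y, z} \<in> H"
      by (simp add: adj_in_def)
    with step.IH have to_yz: "(f e, f {y, z}) \<in> ?R\<^sup>*"
      by blast
    show ?case
    proof (intro ballI impI)
      fix e'
      assume "e' \<in> H" "z \<in> e'"
      then have "(f {y, z}, f e') \<in> ?R"
        using meet[OF yz \<open>e' \<in> H\<close>, of z] by blast
      with to_yz show "(f e, f e') \<in> ?R\<^sup>*"
        by (rule rtrancl_into_rtrancl)
    qed
  }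
qed

lemma connected_graph_imp_connected_union_image:
  assumes conn: "connected_graph S H" and edges: "\<forall>e\<in>H. e \<noteq> {} \<and> e \<subseteq> S"
    and ext: "\<forall>e\<in>H. e \<subseteq> f e"
  shows "connected_union (f ` H)"
  unfolding connected_union_def
proof (intro ballI)
  fix A B
  assume "A \<in> f ` H" "B \<in> f ` H"
  then obtain e e' where e: "e \<in> H" "e' \<in> H" and AB: "A = f e" "B = f e'"
    by blast
  obtain a b where "a \<in> e" "b \<in> e'"
    using edges e by (meson ex_in_conv)
  then have "a \<in> S" "b \<in> S"
    using edges e by blast+
  then have "(a, b) \<in> (adj_in H S)\<^sup>*"
    using conn unfolding connected_graph_def by blast
  with adj_in_rtrancl_imp_intersection_chain[OF ext e(1) \<open>a \<in> e\<close>]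
  show "(A, B) \<in> {(X, Y). X \<in> f ` H \<and> Y \<in> f ` H \<and> X \<inter> Y \<noteq> {}}\<^sup>*"
    using e(2) \<open>b \<in> e'\<close> AB by blast
qed

lemma connected_union_I_H_induced_edges:
  assumes "graph V T" "F \<subseteq> V" "connected_graph F (induced_edges T F)"
  shows "connected_union (I_H V E ` induced_edges T F)"
proof (rule connected_graph_imp_connected_union_image[OF assms(3)])
  show "\<forall>e\<in>induced_edges T F. e \<noteq> {} \<and> e \<subseteq> F"
  proof
    fix e
    assume "e \<in> induced_edges T F"
    then obtain u v where "e = {u, v}" "u \<in> F" "v \<in> F"
      by (rule induced_edgeE[OF assms(1)])
    then show "e \<noteq> {} \<and> e \<subseteq> F"
      by blast
  qed
  have "e \<subseteq> V" if "e \<in> induced_edges T F" for e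
    using that assms(2) unfolding induced_edges_def by blast
  then show "\<forall>e\<in>induced_edges T F. e \<subseteq> I_H V E e"
    using subset_I_H by blast
qed

theorem mainTheorem3:
  fixes V :: "'a set" and E :: "'a set set" and T :: "'a set set" and F :: "'a set"
  assumes "hypertree V E"
    and "host_tree V E T"
    and "F \<subseteq> V"
    and "\<forall>T'. host_tree V E T' \<longrightarrow> tree F (induced_edges T' F)"
    and "\<not> (\<exists>x. F = {x})"
  shows "(\<forall>u v. {u, v} \<in> T \<and> {u, v} \<subseteq> F \<longrightarrow> I_H V E {u, v} \<subseteq> F)
         \<and> F = (\<Union>uv\<in>induced_edges T F. I_H V E uv)
         \<and> connected_union ((\<lambda>uv. I_H V E uv) ` induced_edges T F)"
proof -
  have hg: "hypergraph V E"
    using assms(1) unfolding hypertree_def by blast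
  have graph: "graph V T" and conn: "connected_graph F (induced_edges T F)"
    using assms(2,4) unfolding host_tree_def tree_def by blast+
  have F: "induces_subtree_of_all_hosts V E F"
    using assms(4) unfolding induces_subtree_of_all_hosts_def .
  note part1 = I_H_edge_subset_subtree[OF hg assms(2) F assms(3)]
  have "F = (\<Union>uv\<in>induced_edges T F. I_H V E uv)"
    using Union_I_H_induced_edges_eq[OF graph assms(3) conn assms(5) part1] by simp
  moreover have "connected_union ((\<lambda>uv. I_H V E uv) ` induced_edges T F)"
    using connected_union_I_H_induced_edges[OF graph assms(3) conn] by simp
  moreover have "\<forall>u v. {u, v} \<in> T \<and> {u, v} \<subseteq> F \<longrightarrow> I_H V E {u, v} \<subseteq> F"
    using part1 by simp
  ultimately show ?thesis
    by blast
qed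

end
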